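(* Let $\mathcal{Q}$ be a small Cauchy-bilateral quantaloid. Then the Cauchy completion $\mathbb{A}_{\mathsf{cc}}$ of every symmetric $\mathcal{Q}$-category $\mathbb{A}$ is symmetric, and the symmetrisation $\mathbb{C}_{\mathsf s}$ of every Cauchy complete $\mathcal{Q}$-category $\mathbb{C}$ is Cauchy complete. (That is, Cauchy completion restricts to an endofunctor of $\mathsf{SymCat}(\mathcal{Q})$ and symmetrisation restricts to an endofunctor of the full subcategory of Cauchy complete $\mathcal{Q}$-categories.)
   Context: A quantaloid is a category enriched in $\mathsf{Sup}$ (complete lattices and supremum-preserving maps). An involution on $\mathcal{Q}$ is an assignment $f\mapsto f^{\mathsf o}$ on morphisms, identity on objects, sending $f\colon X\to Y$ to $f^{\mathsf o}\colon Y\to X$, monotone, with $(g\circ f)^{\mathsf o}=f^{\mathsf o}\circ g^{\mathsf o}$ and $f^{\mathsf{oo}}=f$. $\mathcal{Q}$ is Cauchy-bilateral if it is involutive and for every object $X$ and every family $(f_i\colon X\to X_i,\ g_i\colon X_i\to X)_{i\in I}$ of morphisms: if $f_k\circ g_j\circ f_j\le f_k$ and $g_j\circ f_j\circ g_k\le g_k$ for all $j,k\in I$ and $1_X\le\bigvee_i g_i\circ f_i$, then $1_X\le\bigvee_i(g_i\wedge f_i^{\mathsf o})\circ(g_i^{\mathsf o}\wedge f_i)$. A $\mathcal{Q}$-category $\mathbb{A}$: a set $\mathbb{A}_0$ of objects with types $tx\in\mathcal{Q}_0$ and homs $\mathbb{A}(y,x)\colon tx\to ty$ with $\mathbb{A}(z,y)\circ\mathbb{A}(y,x)\le\mathbb{A}(z,x)$,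 $1_{tx}\le\mathbb{A}(x,x)$. Functors $F\colon\mathbb{A}\to\mathbb{B}$: type-preserving object maps with $\mathbb{A}(y,x)\le\mathbb{B}(Fy,Fx)$. $\mathbb{A}$ is symmetric if $\mathbb{A}(x,y)=\mathbb{A}(y,x)^{\mathsf o}$. The symmetrisation $\mathbb{A}_{\mathsf s}$ has the same objects and $\mathbb{A}_{\mathsf s}(y,x)=\mathbb{A}(y,x)\wedge\mathbb{A}(x,y)^{\mathsf o}$. A distributor $\Phi\colon\mathbb{A}\to\mathbb{B}$: arrows $\Phi(y,x)\colon tx\to ty$ with $\mathbb{B}(y',y)\circ\Phi(y,x)\le\Phi(y',x)$, $\Phi(y,x)\circ\mathbb{A}(x,x')\le\Phi(y,x')$; composition $(\Psi\otimes\Phi)(z,x)=\bigvee_y\Psi(z,y)\circ\Phi(y,x)$, identities $\mathbb{A}(-,-)$, elementwise order. $\Phi$ is a left adjoint with right adjoint $\Phi^*$ if $\mathbb{A}\le\Phi^*\otimes\Phi$ and $\Phi\otimes\Phi^*\le\mathbb{B}$. $*_X$ is the one-object $\mathcal{Q}$-category of type $X$ with hom $1_X$; a presheaf on $\mathbb{A}$ is a distributor $*_X\to\mathbb{A}$, and it is representable if it equals $\mathbb{A}(-,a)$ for some $a$ of type $X$. $\mathbb{A}$ is Cauchy complete if every left adjoint presheaf on it is representable. The Cauchy completion $\mathbb{A}_{\mathsf{cc}}$ has objects the left adjoint presheaves $\phi\colon *_X\to\mathbb{A}$ (type $X$) and hom $\mathbb{A}_{\mathsf{cc}}(\psi,\phi)$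 the unique element of $\psi^*\otimes\phi$. *)

theory Defs
  imports Main
begin

text \<open>A small quantaloid is given by a set of objects, hom-sets Hom X Y (arrows X to Y),
  composition cmp g f (= g after f), identities, and the local order leq.\<close>

record ('o, 'm) qtld =
  Obj  :: "'o set"
  Hom  :: "'o \<Rightarrow> 'o \<Rightarrow> 'm set"
  cmp  :: "'m \<Rightarrow> 'm \<Rightarrow> 'm"
  idm  :: "'o \<Rightarrow> 'm"
  leq  :: "'m \<Rightarrow> 'm \<Rightarrow> bool"
  invo :: "'m \<Rightarrow> 'm"

definition is_lub :: "('o,'m) qtld \<Rightarrow> 'o \<Rightarrow> 'o \<Rightarrow> 'm set \<Rightarrow> 'm \<Rightarrow> bool" where
  "is_lub Q X Y S s \<longleftrightarrow> s \<in> Hom Q X Y \<and> (\<forall>a\<in>S. leq Q a s) \<and>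
     (\<forall>u\<in>Hom Q X Y. (\<forall>a\<in>S. leq Q a u) \<longrightarrow> leq Q s u)"

definition hsup :: "('o,'m) qtld \<Rightarrow> 'o \<Rightarrow> 'o \<Rightarrow> 'm set \<Rightarrow> 'm" where
  "hsup Q X Y S = (THE s. is_lub Q X Y S s)"

definition hmeet :: "('o,'m) qtld \<Rightarrow> 'o \<Rightarrow> 'o \<Rightarrow> 'm \<Rightarrow> 'm \<Rightarrow> 'm" where
  "hmeet Q X Y a b = hsup Q X Y {c \<in> Hom Q X Y. leq Q c a \<and> leq Q c b}"

definition quantaloid :: "('o,'m) qtld \<Rightarrow> bool" where
  "quantaloid Q \<longleftrightarrow>
    (\<forall>X\<in>Obj Q. \<forall>Y\<in>Obj Q. \<forall>X'\<in>Obj Q. \<forall>Y'\<in>Obj Q.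
        Hom Q X Y \<inter> Hom Q X' Y' \<noteq> {} \<longrightarrow> X = X' \<and> Y = Y') \<and>
    (\<forall>X\<in>Obj Q. idm Q X \<in> Hom Q X X) \<and>
    (\<forall>X\<in>Obj Q. \<forall>Y\<in>Obj Q. \<forall>Z\<in>Obj Q. \<forall>f\<in>Hom Q X Y. \<forall>g\<in>Hom Q Y Z.
        cmp Q g f \<in> Hom Q X Z) \<and>
    (\<forall>W\<in>Obj Q. \<forall>X\<in>Obj Q. \<forall>Y\<in>Obj Q. \<forall>Z\<in>Obj Q.
        \<forall>f\<in>Hom Q W X. \<forall>g\<in>Hom Q X Y. \<forall>h\<in>Hom Q Y Z.
        cmp Q h (cmp Q g f) = cmp Q (cmp Q h g) f) \<and>
    (\<forall>X\<in>Obj Q. \<forall>Y\<in>Obj Q. \<forall>f\<in>Hom Q X Y.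
        cmp Q f (idm Q X) = f \<and> cmp Q (idm Q Y) f = f) \<and>
    (\<forall>X\<in>Obj Q. \<forall>Y\<in>Obj Q. \<forall>f\<in>Hom Q X Y. leq Q f f) \<and>
    (\<forall>X\<in>Obj Q. \<forall>Y\<in>Obj Q. \<forall>f\<in>Hom Q X Y. \<forall>g\<in>Hom Q X Y. \<forall>h\<in>Hom Q X Y.
        leq Q f g \<longrightarrow> leq Q g h \<longrightarrow> leq Q f h) \<and>
    (\<forall>X\<in>Obj Q. \<forall>Y\<in>Obj Q. \<forall>f\<in>Hom Q X Y. \<forall>g\<in>Hom Q X Y.
        leq Q f g \<longrightarrow> leq Q g f \<longrightarrow> f = g) \<and>
    (\<forall>X\<in>Obj Q. \<forall>Y\<in>Obj Q. \<forall>S. S \<subseteq> Hom Q X Y \<longrightarrow> (\<exists>s. is_lub Q X Y S s)) \<and>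
    (\<forall>X\<in>Obj Q. \<forall>Y\<in>Obj Q. \<forall>Z\<in>Obj Q. \<forall>S. \<forall>g\<in>Hom Q Y Z. S \<subseteq> Hom Q X Y \<longrightarrow>
        cmp Q g (hsup Q X Y S) = hsup Q X Z (cmp Q g ` S)) \<and>
    (\<forall>X\<in>Obj Q. \<forall>Y\<in>Obj Q. \<forall>Z\<in>Obj Q. \<forall>S. \<forall>f\<in>Hom Q X Y. S \<subseteq> Hom Q Y Z \<longrightarrow>
        cmp Q (hsup Q Y Z S) f = hsup Q X Z ((\<lambda>g. cmp Q g f) ` S))"

definition involutive_quantaloid :: "('o,'m) qtld \<Rightarrow> bool" where
  "involutive_quantaloid Q \<longleftrightarrow> quantaloid Q \<and>
    (\<forall>X\<in>Obj Q. \<forall>Y\<in>Obj Q. \<forall>f\<in>Hom Q X Y.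
       invo Q f \<in> Hom Q Y X \<and> invo Q (invo Q f) = f \<and>
       (\<forall>f'\<in>Hom Q X Y. leq Q f f' \<longrightarrow> leq Q (invo Q f) (invo Q f')) \<and>
       (\<forall>Z\<in>Obj Q. \<forall>g\<in>Hom Q Y Z. invo Q (cmp Q g f) = cmp Q (invo Q f) (invo Q g)))"

text \<open>Cauchy-bilateral: families (f_i : X \<rightarrow> X_i, g_i : X_i \<rightarrow> X) are given as sets T of
  triples (X_i, f_i, g_i); repetitions in a family do not affect the condition.\<close>
definition cauchy_bilateral :: "('o,'m) qtld \<Rightarrow> bool" where
  "cauchy_bilateral Q \<longleftrightarrow> involutive_quantaloid Q \<and>
    (\<forall>X\<in>Obj Q. \<forall>T. T \<subseteq> {(Y, f, g). Y \<in> Obj Q \<and> f \<in> Hom Q X Y \<and> g \<in> Hom Q Y X} \<longrightarrow>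
       (\<forall>(Yj, fj, gj)\<in>T. \<forall>(Yk, fk, gk)\<in>T.
           leq Q (cmp Q fk (cmp Q gj fj)) fk \<and> leq Q (cmp Q gj (cmp Q fj gk)) gk) \<longrightarrow>
       leq Q (idm Q X) (hsup Q X X {cmp Q g f | Y f g. (Y, f, g) \<in> T}) \<longrightarrow>
       leq Q (idm Q X) (hsup Q X X
          {cmp Q (hmeet Q Y X g (invo Q f)) (hmeet Q X Y (invo Q g) f) | Y f g. (Y, f, g) \<in> T}))"

text \<open>chom A y x is the hom A(y,x) : t x \<rightarrow> t y.\<close>
record ('a, 'o, 'm) qcat =
  cob  :: "'a set"
  cty  :: "'a \<Rightarrow> 'o"
  chom :: "'a \<Rightarrow> 'a \<Rightarrow> 'm"

definition qcategory :: "('o,'m) qtld \<Rightarrow> ('a,'o,'m) qcat \<Rightarrow> bool" where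
  "qcategory Q A \<longleftrightarrow>
    (\<forall>x\<in>cob A. cty A x \<in> Obj Q) \<and>
    (\<forall>x\<in>cob A. \<forall>y\<in>cob A. chom A y x \<in> Hom Q (cty A x) (cty A y)) \<and>
    (\<forall>x\<in>cob A. \<forall>y\<in>cob A. \<forall>z\<in>cob A. leq Q (cmp Q (chom A z y) (chom A y x)) (chom A z x)) \<and>
    (\<forall>x\<in>cob A. leq Q (idm Q (cty A x)) (chom A x x))"

definition symmetric :: "('o,'m) qtld \<Rightarrow> ('a,'o,'m) qcat \<Rightarrow> bool" where
  "symmetric Q A \<longleftrightarrow> (\<forall>x\<in>cob A. \<forall>y\<in>cob A. chom A x y = invo Q (chom A y x))"

definition symmetrisation :: "('o,'m) qtld \<Rightarrow> ('a,'o,'m) qcat \<Rightarrow> ('a,'o,'m) qcat" where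
  "symmetrisation Q A = A\<lparr>chom := (\<lambda>y x. hmeet Q (cty A x) (cty A y) (chom A y x) (invo Q (chom A x y)))\<rparr>"

text \<open>A presheaf \<phi> : *_X \<rightarrow> A, with \<phi> y = \<phi>(y,*) : X \<rightarrow> t y.\<close>
definition presheaf :: "('o,'m) qtld \<Rightarrow> ('a,'o,'m) qcat \<Rightarrow> 'o \<Rightarrow> ('a \<Rightarrow> 'm) \<Rightarrow> bool" where
  "presheaf Q A X \<phi> \<longleftrightarrow>
    (\<forall>y\<in>cob A. \<phi> y \<in> Hom Q X (cty A y)) \<and>
    (\<forall>y\<in>cob A. \<forall>y'\<in>cob A. leq Q (cmp Q (chom A y' y) (\<phi> y)) (\<phi> y')) \<and>
    (\<forall>y\<in>cob A. leq Q (cmp Q (\<phi> y) (idm Q X)) (\<phi> y))"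

text \<open>A distributor \<psi> : A \<rightarrow> *_X, with \<psi> y = \<psi>(*,y) : t y \<rightarrow> X.\<close>
definition copresheaf :: "('o,'m) qtld \<Rightarrow> ('a,'o,'m) qcat \<Rightarrow> 'o \<Rightarrow> ('a \<Rightarrow> 'm) \<Rightarrow> bool" where
  "copresheaf Q A X \<psi> \<longleftrightarrow>
    (\<forall>y\<in>cob A. \<psi> y \<in> Hom Q (cty A y) X) \<and>
    (\<forall>y\<in>cob A. leq Q (cmp Q (idm Q X) (\<psi> y)) (\<psi> y)) \<and>
    (\<forall>y\<in>cob A. \<forall>y'\<in>cob A. leq Q (cmp Q (\<psi> y) (chom A y y')) (\<psi> y'))"

text \<open>\<psi> is a right adjoint of the presheaf \<phi> : *_X \<rightarrow> A:
  *_X \<le> \<psi> \<otimes> \<phi> and \<phi> \<otimes> \<psi> \<le> A.\<close>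
definition right_adjoint :: "('o,'m) qtld \<Rightarrow> ('a,'o,'m) qcat \<Rightarrow> 'o \<Rightarrow> ('a \<Rightarrow> 'm) \<Rightarrow> ('a \<Rightarrow> 'm) \<Rightarrow> bool" where
  "right_adjoint Q A X \<phi> \<psi> \<longleftrightarrow> copresheaf Q A X \<psi> \<and>
    leq Q (idm Q X) (hsup Q X X ((\<lambda>y. cmp Q (\<psi> y) (\<phi> y)) ` cob A)) \<and>
    (\<forall>y\<in>cob A. \<forall>y'\<in>cob A. leq Q (cmp Q (\<phi> y) (\<psi> y')) (chom A y y'))"

definition left_adjoint_presheaf :: "('o,'m) qtld \<Rightarrow> ('a,'o,'m) qcat \<Rightarrow> 'o \<Rightarrow> ('a \<Rightarrow> 'm) \<Rightarrow> bool" where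
  "left_adjoint_presheaf Q A X \<phi> \<longleftrightarrow> presheaf Q A X \<phi> \<and> (\<exists>\<psi>. right_adjoint Q A X \<phi> \<psi>)"

definition cauchy_complete :: "('o,'m) qtld \<Rightarrow> ('a,'o,'m) qcat \<Rightarrow> bool" where
  "cauchy_complete Q A \<longleftrightarrow>
    (\<forall>X\<in>Obj Q. \<forall>\<phi>. left_adjoint_presheaf Q A X \<phi> \<longrightarrow>
       (\<exists>a\<in>cob A. cty A a = X \<and> (\<forall>y\<in>cob A. \<phi> y = chom A y a)))"

text \<open>Cauchy completion: objects are pairs (X, \<phi>) with \<phi> a left adjoint presheaf of type X
  (made extensional outside cob A); the hom A_cc((Y,\<psi>),(X,\<phi>)) is the unique element of \<psi>* \<otimes> \<phi>.\<close>
definition cauchy_completion :: "('o,'m) qtld \<Rightarrow> ('a,'o,'m) qcat \<Rightarrow> ('o \<times> ('a \<Rightarrow> 'm), 'o, 'm) qcat" where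
  "cauchy_completion Q A =
    \<lparr> cob = {(X, \<phi>). X \<in> Obj Q \<and> left_adjoint_presheaf Q A X \<phi> \<and> (\<forall>y. y \<notin> cob A \<longrightarrow> \<phi> y = undefined)},
      cty = fst,
      chom = (\<lambda>(Y, \<psi>) (X, \<phi>). THE h. \<exists>\<psi>'. right_adjoint Q A Y \<psi> \<psi>' \<and>
                 h = hsup Q X Y ((\<lambda>y. cmp Q (\<psi>' y) (\<phi> y)) ` cob A)) \<rparr>"

end

theory Submission
  imports Defs
begin

text \<open>
  The key fact is that over a Cauchy-bilateral quantaloid the right adjoint of a left adjoint
  presheaf \<open>\<phi>\<close> on a symmetric category is \<open>\<phi>\<^sup>o\<close>. Applying the bilateral condition to the family
  \<open>(\<phi> y, \<psi> y)\<close> of the adjunction \<open>\<phi> \<stileturn> \<psi>\<close> (its hypotheses follow from the counit)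
  gives \<open>1 \<le> \<Or>\<^sub>y (\<psi> y \<and> \<phi>(y)\<^sup>o)(\<psi>(y)\<^sup>o \<and> \<phi> y)\<close>; composing with \<open>\<psi> x\<close>,
  resp. \<open>\<phi> x\<close>, and using the counit and symmetry yields \<open>\<psi> \<le> \<phi>\<^sup>o\<close> and \<open>\<phi> \<le> \<psi>\<^sup>o\<close>.

  Consequently \<open>\<bbbA>\<^sub>c\<^sub>c(\<psi>, \<phi>) = \<Or>\<^sub>y \<psi>(y)\<^sup>o \<phi>(y)\<close>, which the involution maps to \<open>\<bbbA>\<^sub>c\<^sub>c(\<phi>, \<psi>)\<close>.
  For the symmetrisation, a left adjoint \<open>\<phi> \<stileturn> \<phi>\<^sup>o\<close> on \<open>\<bbbC>\<^sub>s\<close> extends along \<open>\<bbbC>\<^sub>s \<le> \<bbbC>\<close> to the left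
  adjoint \<open>\<bbbC> \<otimes> \<phi>\<close> on \<open>\<bbbC>\<close>, which is representable, say by \<open>a\<close>. Then \<open>\<phi> \<le> \<bbbC>(-, a)\<close> and
  \<open>\<phi>\<^sup>o \<le> \<bbbC>(a, -)\<close>, so \<open>\<phi> \<le> \<bbbC>\<^sub>s(-, a)\<close>; conversely \<open>\<bbbC>\<^sub>s(-, a) \<le> \<phi>\<close> follows from the unit
  of \<open>\<phi> \<stileturn> \<phi>\<^sup>o\<close> and \<open>\<phi>\<^sup>o \<le> \<bbbC>\<^sub>s(a, -)\<close>.
\<close>

locale small_quantaloid =
  fixes Q :: "('o, 'm) qtld"
  assumes quantaloid: "quantaloid Q"
begin

text \<open>The axioms of \<open>quantaloid_def\<close> in rule form.\<close>

lemmas quantaloid_conjuncts = quantaloid[unfolded quantaloid_def, THEN conjunct2]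
lemmas idm_Hom = quantaloid_conjuncts[THEN conjunct1, rule_format]
  and cmp_Hom = quantaloid_conjuncts[THEN conjunct2, THEN conjunct1, rule_format]
  and cmp_assoc_Hom = quantaloid_conjuncts[THEN conjunct2, THEN conjunct2, THEN conjunct1, rule_format]
  and cmp_idm_Hom = quantaloid_conjuncts[THEN conjunct2, THEN conjunct2, THEN conjunct2,
    THEN conjunct1, rule_format]
  and leq_refl = quantaloid_conjuncts[THEN conjunct2, THEN conjunct2, THEN conjunct2,
    THEN conjunct2, THEN conjunct1, rule_format]
  and leq_trans = quantaloid_conjuncts[THEN conjunct2, THEN conjunct2, THEN conjunct2,
    THEN conjunct2, THEN conjunct2, THEN conjunct1, rule_format]
  and leq_antisym = quantaloid_conjuncts[THEN conjunct2, THEN conjunct2, THEN conjunct2,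
    THEN conjunct2, THEN conjunct2, THEN conjunct2, THEN conjunct1, rule_format]
  and lub_exists = quantaloid_conjuncts[THEN conjunct2, THEN conjunct2, THEN conjunct2,
    THEN conjunct2, THEN conjunct2, THEN conjunct2, THEN conjunct2, THEN conjunct1, rule_format]
  and cmp_hsup_Hom = quantaloid_conjuncts[THEN conjunct2, THEN conjunct2, THEN conjunct2,
    THEN conjunct2, THEN conjunct2, THEN conjunct2, THEN conjunct2, THEN conjunct2,
    THEN conjunct1, rule_format]
  and hsup_cmp_Hom = quantaloid_conjuncts[THEN conjunct2, THEN conjunct2, THEN conjunct2,
    THEN conjunct2, THEN conjunct2, THEN conjunct2, THEN conjunct2, THEN conjunct2,
    THEN conjunct2, rule_format]

definition arr :: "'o \<Rightarrow> 'o \<Rightarrow> 'm \<Rightarrow> bool" where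
  "arr X Y f \<longleftrightarrow> X \<in> Obj Q \<and> Y \<in> Obj Q \<and> f \<in> Hom Q X Y"

text \<open>The local order carrying its hom-set: this makes transitivity free of typing side
  conditions, so inequalities can be chained with also/finally.\<close>

definition hom_le :: "'o \<Rightarrow> 'o \<Rightarrow> 'm \<Rightarrow> 'm \<Rightarrow> bool" where
  "hom_le X Y f g \<longleftrightarrow> arr X Y f \<and> arr X Y g \<and> leq Q f g"

lemma arr_dom: "arr X Y f \<Longrightarrow> X \<in> Obj Q"
  and arr_cod: "arr X Y f \<Longrightarrow> Y \<in> Obj Q"
  by (simp_all add: arr_def)

lemma arr_idm: "X \<in> Obj Q \<Longrightarrow> arr X X (idm Q X)"
  by (simp add: arr_def idm_Hom)

lemma arr_cmp: "arr X Y f \<Longrightarrow> arr Y Z g \<Longrightarrow> arr X Z (cmp Q g f)"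
  unfolding arr_def by (blast intro: cmp_Hom)

lemma cmp_assoc:
  "arr W X f \<Longrightarrow> arr X Y g \<Longrightarrow> arr Y Z h \<Longrightarrow> cmp Q h (cmp Q g f) = cmp Q (cmp Q h g) f"
  unfolding arr_def by (blast intro: cmp_assoc_Hom)

lemma cmp_idm_right: "arr X Y f \<Longrightarrow> cmp Q f (idm Q X) = f"
  and cmp_idm_left: "arr X Y f \<Longrightarrow> cmp Q (idm Q Y) f = f"
  unfolding arr_def by (blast dest: cmp_idm_Hom)+

lemma hom_le_arr_left: "hom_le X Y f g \<Longrightarrow> arr X Y f"
  and hom_le_arr_right: "hom_le X Y f g \<Longrightarrow> arr X Y g"
  by (simp_all add: hom_le_def)

lemma hom_le_refl: "arr X Y f \<Longrightarrow> hom_le X Y f f"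
  unfolding hom_le_def arr_def by (blast intro: leq_refl)

lemma hom_le_trans [trans]: "hom_le X Y f g \<Longrightarrow> hom_le X Y g h \<Longrightarrow> hom_le X Y f h"
  unfolding hom_le_def arr_def by (metis leq_trans)

lemma hom_le_antisym: "hom_le X Y f g \<Longrightarrow> hom_le X Y g f \<Longrightarrow> f = g"
  unfolding hom_le_def arr_def by (metis leq_antisym)

lemma hsup_is_lub:
  assumes "X \<in> Obj Q" "Y \<in> Obj Q" "\<And>a. a \<in> S \<Longrightarrow> arr X Y a"
  shows "is_lub Q X Y S (hsup Q X Y S)"
proof -
  have "S \<subseteq> Hom Q X Y" using assms(3) by (auto simp: arr_def)
  then obtain s where s: "is_lub Q X Y S s"
    using lub_exists assms(1,2) by blast
  moreover have "s' = s" if "is_lub Q X Y S s'" for s'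
    using s that assms(1,2) leq_antisym unfolding is_lub_def by metis
  ultimately show ?thesis unfolding hsup_def by (rule theI)
qed

lemma arr_hsup:
  "X \<in> Obj Q \<Longrightarrow> Y \<in> Obj Q \<Longrightarrow> (\<And>a. a \<in> S \<Longrightarrow> arr X Y a) \<Longrightarrow> arr X Y (hsup Q X Y S)"
  using hsup_is_lub by (simp add: is_lub_def arr_def)

lemma hsup_upper:
  assumes "\<And>a. a \<in> S \<Longrightarrow> arr X Y a" "a \<in> S"
  shows "hom_le X Y a (hsup Q X Y S)"
proof -
  have XY: "X \<in> Obj Q" "Y \<in> Obj Q" using assms arr_dom arr_cod by blast+
  then show ?thesis
    using assms hsup_is_lub[OF XY assms(1)] arr_hsup[OF XY assms(1)]
    by (auto simp: hom_le_def is_lub_def)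
qed

lemma hsup_least:
  assumes "arr X Y u" "\<And>a. a \<in> S \<Longrightarrow> hom_le X Y a u"
  shows "hom_le X Y (hsup Q X Y S) u"
proof -
  have "is_lub Q X Y S (hsup Q X Y S)"
    using assms by (intro hsup_is_lub) (auto simp: arr_def hom_le_def)
  then show ?thesis
    using assms by (auto simp: is_lub_def hom_le_def arr_def)
qed

lemma cmp_hsup:
  assumes "arr Y Z g" "X \<in> Obj Q" "\<And>a. a \<in> S \<Longrightarrow> arr X Y a"
  shows "cmp Q g (hsup Q X Y S) = hsup Q X Z (cmp Q g ` S)"
  using assms cmp_hsup_Hom[of X Y Z g S] by (auto simp: arr_def)

lemma hsup_cmp:
  assumes "arr X Y f" "Z \<in> Obj Q" "\<And>b. b \<in> S \<Longrightarrow> arr Y Z b"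
  shows "cmp Q (hsup Q Y Z S) f = hsup Q X Z ((\<lambda>b. cmp Q b f) ` S)"
  using assms hsup_cmp_Hom[of X Y Z f S] by (auto simp: arr_def)

lemma hsup_pair_eq:
  assumes "hom_le X Y f g"
  shows "hsup Q X Y {f, g} = g"
proof (rule hom_le_antisym)
  have f: "arr X Y f" and g: "arr X Y g"
    using assms by (simp_all add: hom_le_def)
  show "hom_le X Y (hsup Q X Y {f, g}) g"
    using assms g by (auto intro: hsup_least hom_le_refl)
  show "hom_le X Y g (hsup Q X Y {f, g})"
    using f g by (auto intro: hsup_upper)
qed

lemma cmp_mono_right: "hom_le X Y f f' \<Longrightarrow> arr Y Z g \<Longrightarrow> hom_le X Z (cmp Q g f) (cmp Q g f')"
proof -
  assume le: "hom_le X Y f f'" and g: "arr Y Z g"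
  have f: "arr X Y f" "arr X Y f'" using le hom_le_arr_left hom_le_arr_right by blast+
  have "cmp Q g f' = hsup Q X Z (cmp Q g ` {f, f'})"
    using cmp_hsup[OF g arr_dom[OF f(1)], of "{f, f'}"] hsup_pair_eq[OF le] f by auto
  moreover have "hom_le X Z (cmp Q g f) (hsup Q X Z (cmp Q g ` {f, f'}))"
    using f g by (intro hsup_upper) (auto intro: arr_cmp)
  ultimately show ?thesis by simp
qed

lemma cmp_mono_left: "hom_le Y Z g g' \<Longrightarrow> arr X Y f \<Longrightarrow> hom_le X Z (cmp Q g f) (cmp Q g' f)"
proof -
  assume le: "hom_le Y Z g g'" and f: "arr X Y f"
  have g: "arr Y Z g" "arr Y Z g'" using le hom_le_arr_left hom_le_arr_right by blast+
  have "cmp Q g' f = hsup Q X Z ((\<lambda>b. cmp Q b f) ` {g, g'})"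
    using hsup_cmp[OF f arr_cod[OF g(1)], of "{g, g'}"] hsup_pair_eq[OF le] g by auto
  moreover have "hom_le X Z (cmp Q g f) (hsup Q X Z ((\<lambda>b. cmp Q b f) ` {g, g'}))"
    using f g by (intro hsup_upper) (auto intro: arr_cmp)
  ultimately show ?thesis by simp
qed

lemma cmp_mono: "hom_le X Y f f' \<Longrightarrow> hom_le Y Z g g' \<Longrightarrow> hom_le X Z (cmp Q g f) (cmp Q g' f')"
  using cmp_mono_left cmp_mono_right hom_le_arr_left hom_le_arr_right hom_le_trans by metis

lemma cmp_hsup_le:
  assumes "arr Y Z g" "arr X Z u" "\<And>i. i \<in> I \<Longrightarrow> arr X Y (f i)"
    and "\<And>i. i \<in> I \<Longrightarrow> hom_le X Z (cmp Q g (f i)) u"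
  shows "hom_le X Z (cmp Q g (hsup Q X Y (f ` I))) u"
  using assms by (subst cmp_hsup) (auto intro: hsup_least arr_dom)

lemma hsup_cmp_le:
  assumes "arr X Y f" "arr X Z u" "\<And>i. i \<in> I \<Longrightarrow> arr Y Z (g i)"
    and "\<And>i. i \<in> I \<Longrightarrow> hom_le X Z (cmp Q (g i) f) u"
  shows "hom_le X Z (cmp Q (hsup Q Y Z (g ` I)) f) u"
  using assms by (subst hsup_cmp) (auto intro: hsup_least arr_cod)

lemma hsup_mono:
  assumes "X \<in> Obj Q" "Y \<in> Obj Q" "\<And>i. i \<in> I \<Longrightarrow> hom_le X Y (f i) (g i)"
  shows "hom_le X Y (hsup Q X Y (f ` I)) (hsup Q X Y (g ` I))"
proof (rule hsup_least)
  have g: "\<And>i. i \<in> I \<Longrightarrow> arr X Y (g i)"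
    using assms(3) by (rule hom_le_arr_right)
  then show "arr X Y (hsup Q X Y (g ` I))"
    using assms(1,2) by (auto intro: arr_hsup)
  fix a assume "a \<in> f ` I"
  then obtain i where i: "i \<in> I" and a: "a = f i" by blast
  have "hom_le X Y (g i) (hsup Q X Y (g ` I))"
    using g i by (auto intro: hsup_upper)
  then show "hom_le X Y a (hsup Q X Y (g ` I))"
    unfolding a using assms(3)[OF i] by (rule hom_le_trans[rotated])
qed

definition hom_tensor :: "('a, 'o, 'm) qcat \<Rightarrow> 'o \<Rightarrow> ('a \<Rightarrow> 'm) \<Rightarrow> 'a \<Rightarrow> 'm" where
  "hom_tensor A X \<phi> z = hsup Q X (cty A z) ((\<lambda>y. cmp Q (chom A z y) (\<phi> y)) ` cob A)"

definition tensor_hom :: "('a, 'o, 'm) qcat \<Rightarrow> 'o \<Rightarrow> ('a \<Rightarrow> 'm) \<Rightarrow> 'a \<Rightarrow> 'm" where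
  "tensor_hom A X \<psi> z = hsup Q (cty A z) X ((\<lambda>y. cmp Q (\<psi> y) (chom A y z)) ` cob A)"

end

locale enriched_category = small_quantaloid Q for Q :: "('o, 'm) qtld" +
  fixes A :: "('a, 'o, 'm) qcat"
  assumes qcategory: "qcategory Q A"
begin

lemma cty_Obj: "x \<in> cob A \<Longrightarrow> cty A x \<in> Obj Q"
  using qcategory by (simp add: qcategory_def)

lemma arr_chom: "x \<in> cob A \<Longrightarrow> y \<in> cob A \<Longrightarrow> arr (cty A x) (cty A y) (chom A y x)"
  using qcategory by (simp add: qcategory_def arr_def)

lemma chom_cmp_le:
  "x \<in> cob A \<Longrightarrow> y \<in> cob A \<Longrightarrow> z \<in> cob A \<Longrightarrow>
    hom_le (cty A x) (cty A z) (cmp Q (chom A z y) (chom A y x)) (chom A z x)"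
  using qcategory arr_cmp[OF arr_chom[of x y] arr_chom[of y z]] arr_chom[of x z]
  by (simp add: qcategory_def hom_le_def)

lemma idm_le_chom: "x \<in> cob A \<Longrightarrow> hom_le (cty A x) (cty A x) (idm Q (cty A x)) (chom A x x)"
  using qcategory by (simp add: qcategory_def hom_le_def arr_chom arr_idm)

lemma presheafI:
  assumes "\<And>y. y \<in> cob A \<Longrightarrow> arr X (cty A y) (\<phi> y)"
    and "\<And>y y'. y \<in> cob A \<Longrightarrow> y' \<in> cob A \<Longrightarrow>
      hom_le X (cty A y') (cmp Q (chom A y' y) (\<phi> y)) (\<phi> y')"
  shows "presheaf Q A X \<phi>"
  using assms cmp_idm_right[OF assms(1)] hom_le_refl[OF assms(1)]
  by (auto simp: presheaf_def hom_le_def arr_def)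

lemma copresheafI:
  assumes "\<And>y. y \<in> cob A \<Longrightarrow> arr (cty A y) X (\<psi> y)"
    and "\<And>y y'. y \<in> cob A \<Longrightarrow> y' \<in> cob A \<Longrightarrow>
      hom_le (cty A y') X (cmp Q (\<psi> y) (chom A y y')) (\<psi> y')"
  shows "copresheaf Q A X \<psi>"
  using assms cmp_idm_left[OF assms(1)] hom_le_refl[OF assms(1)]
  by (auto simp: copresheaf_def hom_le_def arr_def)

lemma arr_hom_tensor:
  "X \<in> Obj Q \<Longrightarrow> (\<And>y. y \<in> cob A \<Longrightarrow> arr X (cty A y) (\<phi> y)) \<Longrightarrow> z \<in> cob A \<Longrightarrow>
    arr X (cty A z) (hom_tensor A X \<phi> z)"
  unfolding hom_tensor_def by (auto intro!: arr_hsup cty_Obj arr_cmp arr_chom)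

lemma arr_tensor_hom:
  "X \<in> Obj Q \<Longrightarrow> (\<And>y. y \<in> cob A \<Longrightarrow> arr (cty A y) X (\<psi> y)) \<Longrightarrow> z \<in> cob A \<Longrightarrow>
    arr (cty A z) X (tensor_hom A X \<psi> z)"
  unfolding tensor_hom_def by (auto intro!: arr_hsup cty_Obj arr_cmp arr_chom)

lemma le_hom_tensor:
  assumes "X \<in> Obj Q" "\<And>y. y \<in> cob A \<Longrightarrow> arr X (cty A y) (\<phi> y)" "y \<in> cob A"
  shows "hom_le X (cty A y) (\<phi> y) (hom_tensor A X \<phi> y)"
proof -
  have "\<phi> y = cmp Q (idm Q (cty A y)) (\<phi> y)"
    using cmp_idm_left[OF assms(2)[OF assms(3)]] by simp
  also have "hom_le X (cty A y) \<dots> (cmp Q (chom A y y) (\<phi> y))"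
    using assms by (blast intro: cmp_mono_left idm_le_chom)
  also have "hom_le X (cty A y) \<dots> (hom_tensor A X \<phi> y)"
    unfolding hom_tensor_def using assms by (intro hsup_upper) (auto intro: arr_cmp arr_chom)
  finally show ?thesis .
qed

lemma le_tensor_hom:
  assumes "X \<in> Obj Q" "\<And>y. y \<in> cob A \<Longrightarrow> arr (cty A y) X (\<psi> y)" "y \<in> cob A"
  shows "hom_le (cty A y) X (\<psi> y) (tensor_hom A X \<psi> y)"
proof -
  have "\<psi> y = cmp Q (\<psi> y) (idm Q (cty A y))"
    using cmp_idm_right[OF assms(2)[OF assms(3)]] by simp
  also have "hom_le (cty A y) X \<dots> (cmp Q (\<psi> y) (chom A y y))"
    using assms by (blast intro: cmp_mono_right idm_le_chom)
  also have "hom_le (cty A y) X \<dots> (tensor_hom A X \<psi> y)"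
    unfolding tensor_hom_def using assms by (intro hsup_upper) (auto intro: arr_cmp arr_chom)
  finally show ?thesis .
qed

lemma presheaf_hom_tensor:
  assumes X: "X \<in> Obj Q" and \<phi>: "\<And>y. y \<in> cob A \<Longrightarrow> arr X (cty A y) (\<phi> y)"
  shows "presheaf Q A X (hom_tensor A X \<phi>)"
proof (rule presheafI)
  show "arr X (cty A y) (hom_tensor A X \<phi> y)" if "y \<in> cob A" for y
    using X \<phi> that by (rule arr_hom_tensor)
  fix y y' assume y: "y \<in> cob A" and y': "y' \<in> cob A"
  show "hom_le X (cty A y') (cmp Q (chom A y' y) (hom_tensor A X \<phi> y)) (hom_tensor A X \<phi> y')"
    unfolding hom_tensor_def[of A X \<phi> y]
  proof (rule cmp_hsup_le)
    fix w assume w: "w \<in> cob A"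
    have "cmp Q (chom A y' y) (cmp Q (chom A y w) (\<phi> w)) =
        cmp Q (cmp Q (chom A y' y) (chom A y w)) (\<phi> w)"
      by (rule cmp_assoc[OF \<phi>[OF w] arr_chom[OF w y] arr_chom[OF y y']])
    also have "hom_le X (cty A y') \<dots> (cmp Q (chom A y' w) (\<phi> w))"
      by (rule cmp_mono_left[OF chom_cmp_le[OF w y y'] \<phi>[OF w]])
    also have "hom_le X (cty A y') \<dots> (hom_tensor A X \<phi> y')"
      unfolding hom_tensor_def using y' \<phi> by (intro hsup_upper) (auto intro: arr_cmp arr_chom w)
    finally show "hom_le X (cty A y') (cmp Q (chom A y' y) (cmp Q (chom A y w) (\<phi> w)))
        (hom_tensor A X \<phi> y')" .
  qed (use X \<phi> y y' in \<open>auto intro: arr_chom arr_cmp arr_hom_tensor\<close>)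
qed

lemma copresheaf_tensor_hom:
  assumes X: "X \<in> Obj Q" and \<psi>: "\<And>y. y \<in> cob A \<Longrightarrow> arr (cty A y) X (\<psi> y)"
  shows "copresheaf Q A X (tensor_hom A X \<psi>)"
proof (rule copresheafI)
  show "arr (cty A y) X (tensor_hom A X \<psi> y)" if "y \<in> cob A" for y
    using X \<psi> that by (rule arr_tensor_hom)
  fix y y' assume y: "y \<in> cob A" and y': "y' \<in> cob A"
  show "hom_le (cty A y') X (cmp Q (tensor_hom A X \<psi> y) (chom A y y')) (tensor_hom A X \<psi> y')"
    unfolding tensor_hom_def[of A X \<psi> y]
  proof (rule hsup_cmp_le)
    fix w assume w: "w \<in> cob A"
    have "cmp Q (cmp Q (\<psi> w) (chom A w y)) (chom A y y') =
        cmp Q (\<psi> w) (cmp Q (chom A w y) (chom A y y'))"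
      by (rule cmp_assoc[OF arr_chom[OF y' y] arr_chom[OF y w] \<psi>[OF w], symmetric])
    also have "hom_le (cty A y') X \<dots> (cmp Q (\<psi> w) (chom A w y'))"
      by (rule cmp_mono_right[OF chom_cmp_le[OF y' y w] \<psi>[OF w]])
    also have "hom_le (cty A y') X \<dots> (tensor_hom A X \<psi> y')"
      unfolding tensor_hom_def using y' \<psi> by (intro hsup_upper) (auto intro: arr_cmp arr_chom w)
    finally show "hom_le (cty A y') X (cmp Q (cmp Q (\<psi> w) (chom A w y)) (chom A y y'))
        (tensor_hom A X \<psi> y')" .
  qed (use X \<psi> y y' in \<open>auto intro: arr_chom arr_cmp arr_tensor_hom\<close>)
qed

end

locale presheaf_adjunction = enriched_category +
  fixes X and \<phi> \<psi>
  assumes Obj_X: "X \<in> Obj Q"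
    and presheaf: "presheaf Q A X \<phi>"
    and right_adjoint: "right_adjoint Q A X \<phi> \<psi>"
begin

lemma arr_presheaf: "y \<in> cob A \<Longrightarrow> arr X (cty A y) (\<phi> y)"
  using presheaf Obj_X cty_Obj by (simp add: presheaf_def arr_def)

lemma arr_adjoint: "y \<in> cob A \<Longrightarrow> arr (cty A y) X (\<psi> y)"
  using right_adjoint Obj_X cty_Obj by (simp add: right_adjoint_def copresheaf_def arr_def)

lemma presheaf_le:
  "y \<in> cob A \<Longrightarrow> y' \<in> cob A \<Longrightarrow> hom_le X (cty A y') (cmp Q (chom A y' y) (\<phi> y)) (\<phi> y')"
  using presheaf arr_cmp[OF arr_presheaf arr_chom] arr_presheaf
  by (simp add: presheaf_def hom_le_def)

lemma adjoint_le:
  "y \<in> cob A \<Longrightarrow> y' \<in> cob A \<Longrightarrow> hom_le (cty A y') X (cmp Q (\<psi> y) (chom A y y')) (\<psi> y')"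
  using right_adjoint arr_cmp[OF arr_chom arr_adjoint] arr_adjoint
  by (simp add: right_adjoint_def copresheaf_def hom_le_def)

lemma arr_unit: "arr X X (hsup Q X X ((\<lambda>y. cmp Q (\<psi> y) (\<phi> y)) ` cob A))"
  using Obj_X by (auto intro!: arr_hsup arr_cmp[OF arr_presheaf arr_adjoint])

lemma adjunction_unit: "hom_le X X (idm Q X) (hsup Q X X ((\<lambda>y. cmp Q (\<psi> y) (\<phi> y)) ` cob A))"
  using right_adjoint arr_unit arr_idm[OF Obj_X] by (simp add: right_adjoint_def hom_le_def)

lemma adjunction_counit:
  "y \<in> cob A \<Longrightarrow> y' \<in> cob A \<Longrightarrow> hom_le (cty A y') (cty A y) (cmp Q (\<phi> y) (\<psi> y')) (chom A y y')"
  using right_adjoint arr_cmp[OF arr_adjoint arr_presheaf] arr_chom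
  by (simp add: right_adjoint_def hom_le_def)

lemma presheaf_cmp_unit_le:
  assumes j: "j \<in> cob A" and k: "k \<in> cob A"
  shows "hom_le X (cty A k) (cmp Q (\<phi> k) (cmp Q (\<psi> j) (\<phi> j))) (\<phi> k)"
proof -
  have "cmp Q (\<phi> k) (cmp Q (\<psi> j) (\<phi> j)) = cmp Q (cmp Q (\<phi> k) (\<psi> j)) (\<phi> j)"
    by (rule cmp_assoc[OF arr_presheaf[OF j] arr_adjoint[OF j] arr_presheaf[OF k]])
  also have "hom_le X (cty A k) \<dots> (cmp Q (chom A k j) (\<phi> j))"
    by (rule cmp_mono_left[OF adjunction_counit[OF k j] arr_presheaf[OF j]])
  also have "hom_le X (cty A k) \<dots> (\<phi> k)"
    by (rule presheaf_le[OF j k])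
  finally show ?thesis .
qed

lemma adjoint_cmp_unit_le:
  assumes j: "j \<in> cob A" and k: "k \<in> cob A"
  shows "hom_le (cty A k) X (cmp Q (\<psi> j) (cmp Q (\<phi> j) (\<psi> k))) (\<psi> k)"
proof -
  have "hom_le (cty A k) X (cmp Q (\<psi> j) (cmp Q (\<phi> j) (\<psi> k))) (cmp Q (\<psi> j) (chom A j k))"
    by (rule cmp_mono_right[OF adjunction_counit[OF j k] arr_adjoint[OF j]])
  also have "hom_le (cty A k) X \<dots> (\<psi> k)"
    by (rule adjoint_le[OF j k])
  finally show ?thesis .
qed

lemma adjoint_le_chom:
  assumes a: "a \<in> cob A" "cty A a = X" and unit: "hom_le X X (idm Q X) (\<phi> a)"
    and y: "y \<in> cob A"
  shows "hom_le (cty A y) X (\<psi> y) (chom A a y)"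
proof -
  have "\<psi> y = cmp Q (idm Q X) (\<psi> y)"
    using cmp_idm_left[OF arr_adjoint[OF y]] by simp
  also have "hom_le (cty A y) X \<dots> (cmp Q (\<phi> a) (\<psi> y))"
    by (rule cmp_mono_left[OF unit arr_adjoint[OF y]])
  also have "hom_le (cty A y) X \<dots> (chom A a y)"
    using adjunction_counit[OF a(1) y] a(2) by simp
  finally show ?thesis .
qed

lemma chom_le_presheaf:
  assumes a: "a \<in> cob A" "cty A a = X"
    and \<psi>_le: "\<And>z. z \<in> cob A \<Longrightarrow> hom_le (cty A z) X (\<psi> z) (chom A a z)"
    and y: "y \<in> cob A"
  shows "hom_le X (cty A y) (chom A y a) (\<phi> y)"
proof -
  have ya: "arr X (cty A y) (chom A y a)"
    using arr_chom[OF a(1) y] a(2) by simp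
  have "chom A y a = cmp Q (chom A y a) (idm Q X)"
    using cmp_idm_right[OF ya] by simp
  also have "hom_le X (cty A y) \<dots>
      (cmp Q (chom A y a) (hsup Q X X ((\<lambda>z. cmp Q (\<psi> z) (\<phi> z)) ` cob A)))"
    by (rule cmp_mono_right[OF adjunction_unit ya])
  also have "hom_le X (cty A y) \<dots> (\<phi> y)"
  proof (rule cmp_hsup_le[OF ya arr_presheaf[OF y]])
    fix z assume z: "z \<in> cob A"
    have "cmp Q (chom A y a) (cmp Q (\<psi> z) (\<phi> z)) = cmp Q (cmp Q (chom A y a) (\<psi> z)) (\<phi> z)"
      by (rule cmp_assoc[OF arr_presheaf[OF z] arr_adjoint[OF z] ya])
    also have "hom_le X (cty A y) \<dots> (cmp Q (cmp Q (chom A y a) (chom A a z)) (\<phi> z))"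
      by (rule cmp_mono_left[OF cmp_mono_right[OF \<psi>_le[OF z] ya] arr_presheaf[OF z]])
    also have "hom_le X (cty A y) \<dots> (cmp Q (chom A y z) (\<phi> z))"
      using cmp_mono_left[OF chom_cmp_le[OF z a(1) y] arr_presheaf[OF z]] a(2) by simp
    also have "hom_le X (cty A y) \<dots> (\<phi> y)"
      by (rule presheaf_le[OF z y])
    finally show "hom_le X (cty A y) (cmp Q (chom A y a) (cmp Q (\<psi> z) (\<phi> z))) (\<phi> y)" .
  qed (auto intro: arr_cmp arr_presheaf arr_adjoint)
  finally show ?thesis .
qed

end

lemma (in enriched_category) presheaf_adjunction_tensor:
  assumes "presheaf_adjunction Q A' X \<phi> \<psi>"
    and cob: "cob A' = cob A" and cty: "cty A' = cty A"
    and A'_le_A: "\<And>x y. x \<in> cob A \<Longrightarrow> y \<in> cob A \<Longrightarrow>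
      hom_le (cty A x) (cty A y) (chom A' y x) (chom A y x)"
  shows "presheaf_adjunction Q A X (hom_tensor A X \<phi>) (tensor_hom A X \<psi>)"
proof -
  interpret A': presheaf_adjunction Q A' X \<phi> \<psi> by fact
  note X = A'.Obj_X
  have \<phi>: "\<And>y. y \<in> cob A \<Longrightarrow> arr X (cty A y) (\<phi> y)"
    using A'.arr_presheaf by (simp add: cob cty)
  have \<psi>: "\<And>y. y \<in> cob A \<Longrightarrow> arr (cty A y) X (\<psi> y)"
    using A'.arr_adjoint by (simp add: cob cty)
  have counit: "hom_le (cty A w) (cty A y) (cmp Q (\<phi> y) (\<psi> w)) (chom A y w)"
    if "y \<in> cob A" "w \<in> cob A" for y w
    using A'.adjunction_counit[of y w] A'_le_A[OF that(2,1)] that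
    by (auto simp: cob cty intro: hom_le_trans)
  let ?\<phi>' = "hom_tensor A X \<phi>" and ?\<psi>' = "tensor_hom A X \<psi>"
  have unit: "hom_le X X (idm Q X) (hsup Q X X ((\<lambda>y. cmp Q (?\<psi>' y) (?\<phi>' y)) ` cob A))"
  proof -
    have "hom_le X X (idm Q X) (hsup Q X X ((\<lambda>y. cmp Q (\<psi> y) (\<phi> y)) ` cob A))"
      using A'.adjunction_unit by (simp add: cob)
    also have "hom_le X X \<dots> (hsup Q X X ((\<lambda>y. cmp Q (?\<psi>' y) (?\<phi>' y)) ` cob A))"
      using X \<phi> \<psi> by (intro hsup_mono cmp_mono[OF le_hom_tensor le_tensor_hom])
    finally show ?thesis .
  qed
  have \<phi>_\<psi>': "hom_le (cty A z') (cty A y) (cmp Q (\<phi> y) (?\<psi>' z')) (chom A y z')"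
    if y: "y \<in> cob A" and z': "z' \<in> cob A" for y z'
    unfolding tensor_hom_def
  proof (rule cmp_hsup_le[OF \<phi>[OF y] arr_chom[OF z' y]])
    fix w assume w: "w \<in> cob A"
    have "cmp Q (\<phi> y) (cmp Q (\<psi> w) (chom A w z')) = cmp Q (cmp Q (\<phi> y) (\<psi> w)) (chom A w z')"
      by (rule cmp_assoc[OF arr_chom[OF z' w] \<psi>[OF w] \<phi>[OF y]])
    also have "hom_le (cty A z') (cty A y) \<dots> (cmp Q (chom A y w) (chom A w z'))"
      by (rule cmp_mono_left[OF counit[OF y w] arr_chom[OF z' w]])
    also have "hom_le (cty A z') (cty A y) \<dots> (chom A y z')"
      by (rule chom_cmp_le[OF z' w y])
    finally show "hom_le (cty A z') (cty A y) (cmp Q (\<phi> y) (cmp Q (\<psi> w) (chom A w z')))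
        (chom A y z')" .
  qed (use \<psi> in \<open>auto intro: arr_cmp arr_chom z'\<close>)
  have counit': "hom_le (cty A z') (cty A z) (cmp Q (?\<phi>' z) (?\<psi>' z')) (chom A z z')"
    if z: "z \<in> cob A" and z': "z' \<in> cob A" for z z'
    unfolding hom_tensor_def[of A X \<phi> z]
  proof (rule hsup_cmp_le[OF arr_tensor_hom[OF X \<psi> z'] arr_chom[OF z' z]])
    fix y assume y: "y \<in> cob A"
    have "cmp Q (cmp Q (chom A z y) (\<phi> y)) (?\<psi>' z') = cmp Q (chom A z y) (cmp Q (\<phi> y) (?\<psi>' z'))"
      by (rule cmp_assoc[OF arr_tensor_hom[OF X \<psi> z'] \<phi>[OF y] arr_chom[OF y z], symmetric])
    also have "hom_le (cty A z') (cty A z) \<dots> (cmp Q (chom A z y) (chom A y z'))"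
      by (rule cmp_mono_right[OF \<phi>_\<psi>'[OF y z'] arr_chom[OF y z]])
    also have "hom_le (cty A z') (cty A z) \<dots> (chom A z z')"
      by (rule chom_cmp_le[OF z' y z])
    finally show "hom_le (cty A z') (cty A z) (cmp Q (cmp Q (chom A z y) (\<phi> y)) (?\<psi>' z'))
        (chom A z z')" .
  qed (use \<phi> in \<open>auto intro: arr_cmp arr_chom z\<close>)
  show ?thesis
  proof unfold_locales
    show "X \<in> Obj Q" by (rule X)
    show "presheaf Q A X ?\<phi>'" using X \<phi> by (rule presheaf_hom_tensor)
    show "right_adjoint Q A X ?\<phi>' ?\<psi>'"
      using copresheaf_tensor_hom[OF X \<psi>] unit counit' by (simp add: right_adjoint_def hom_le_def)
  qed
qed

locale involutive_small_quantaloid =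
  fixes Q :: "('o, 'm) qtld"
  assumes involutive: "involutive_quantaloid Q"

sublocale involutive_small_quantaloid \<subseteq> small_quantaloid
  using involutive by unfold_locales (simp add: involutive_quantaloid_def)

context involutive_small_quantaloid
begin

lemmas invo_Hom = involutive[unfolded involutive_quantaloid_def, THEN conjunct2, rule_format]

lemma arr_invo: "arr X Y f \<Longrightarrow> arr Y X (invo Q f)"
  using invo_Hom unfolding arr_def by blast

lemma invo_invo: "arr X Y f \<Longrightarrow> invo Q (invo Q f) = f"
  using invo_Hom unfolding arr_def by blast

lemma invo_mono: "hom_le X Y f g \<Longrightarrow> hom_le Y X (invo Q f) (invo Q g)"
  using invo_Hom unfolding hom_le_def arr_def by blast

lemma invo_cmp: "arr X Y f \<Longrightarrow> arr Y Z g \<Longrightarrow> invo Q (cmp Q g f) = cmp Q (invo Q f) (invo Q g)"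
  using invo_Hom unfolding arr_def by blast

lemma invo_le_iff:
  assumes "arr X Y f" "arr Y X g"
  shows "hom_le Y X (invo Q f) g \<longleftrightarrow> hom_le X Y f (invo Q g)"
  using invo_mono[of Y X "invo Q f" g] invo_mono[of X Y f "invo Q g"] assms
  by (auto simp: invo_invo)

lemma invo_idm:
  assumes "X \<in> Obj Q"
  shows "invo Q (idm Q X) = idm Q X"
proof -
  have i: "arr X X (idm Q X)" and i': "arr X X (invo Q (idm Q X))"
    using assms by (simp_all add: arr_idm arr_invo)
  have "invo Q (idm Q X) = cmp Q (invo Q (idm Q X)) (invo Q (invo Q (idm Q X)))"
    using cmp_idm_right[OF i'] invo_invo[OF i] by simp
  also have "\<dots> = invo Q (invo Q (idm Q X))"
    using invo_cmp[OF i i'] cmp_idm_right[OF i'] by simp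
  finally show ?thesis
    using invo_invo[OF i] by simp
qed

lemma invo_hsup:
  assumes X: "X \<in> Obj Q" and Y: "Y \<in> Obj Q" and S: "\<And>a. a \<in> S \<Longrightarrow> arr X Y a"
  shows "invo Q (hsup Q X Y S) = hsup Q Y X (invo Q ` S)"
proof (rule hom_le_antisym)
  have sup: "arr X Y (hsup Q X Y S)" and sup': "arr Y X (hsup Q Y X (invo Q ` S))"
    using X Y S by (auto intro!: arr_hsup arr_invo)
  have "hom_le X Y (hsup Q X Y S) (invo Q (hsup Q Y X (invo Q ` S)))"
  proof (rule hsup_least)
    fix a assume a: "a \<in> S"
    have "hom_le Y X (invo Q a) (hsup Q Y X (invo Q ` S))"
      using a S by (auto intro!: hsup_upper arr_invo)
    then show "hom_le X Y a (invo Q (hsup Q Y X (invo Q ` S)))"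
      using invo_le_iff[OF S[OF a] sup'] by simp
  qed (use sup' in \<open>rule arr_invo\<close>)
  then show "hom_le Y X (invo Q (hsup Q X Y S)) (hsup Q Y X (invo Q ` S))"
    using invo_le_iff[OF sup sup'] by simp
  show "hom_le Y X (hsup Q Y X (invo Q ` S)) (invo Q (hsup Q X Y S))"
  proof (rule hsup_least)
    fix b assume "b \<in> invo Q ` S"
    then obtain a where a: "a \<in> S" and b: "b = invo Q a" by blast
    show "hom_le Y X b (invo Q (hsup Q X Y S))"
      unfolding b using S a by (auto intro!: invo_mono hsup_upper)
  qed (use sup in \<open>rule arr_invo\<close>)
qed

lemma arr_hmeet: "X \<in> Obj Q \<Longrightarrow> Y \<in> Obj Q \<Longrightarrow> arr X Y (hmeet Q X Y a b)"
  unfolding hmeet_def by (rule arr_hsup) (auto simp: arr_def)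

lemma hmeet_le_left: "arr X Y a \<Longrightarrow> hom_le X Y (hmeet Q X Y a b) a"
  unfolding hmeet_def by (rule hsup_least) (auto simp: hom_le_def arr_def)

lemma hmeet_le_right: "arr X Y b \<Longrightarrow> hom_le X Y (hmeet Q X Y a b) b"
  unfolding hmeet_def by (rule hsup_least) (auto simp: hom_le_def arr_def)

lemma le_hmeet: "hom_le X Y c a \<Longrightarrow> hom_le X Y c b \<Longrightarrow> hom_le X Y c (hmeet Q X Y a b)"
  unfolding hmeet_def by (rule hsup_upper) (auto simp: hom_le_def arr_def)

lemma hmeet_commute: "hmeet Q X Y a b = hmeet Q X Y b a"
  unfolding hmeet_def by (simp add: conj_commute)

lemma invo_hmeet_le:
  "arr X Y a \<Longrightarrow> arr X Y b \<Longrightarrow>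
    hom_le Y X (invo Q (hmeet Q X Y a b)) (hmeet Q Y X (invo Q a) (invo Q b))"
  by (intro le_hmeet invo_mono hmeet_le_left hmeet_le_right)

lemma invo_hmeet:
  assumes a: "arr X Y a" and b: "arr X Y b"
  shows "invo Q (hmeet Q X Y a b) = hmeet Q Y X (invo Q a) (invo Q b)"
proof (rule hom_le_antisym)
  show "hom_le Y X (invo Q (hmeet Q X Y a b)) (hmeet Q Y X (invo Q a) (invo Q b))"
    using a b by (rule invo_hmeet_le)
  have m: "arr X Y (hmeet Q X Y a b)" and m': "arr Y X (hmeet Q Y X (invo Q a) (invo Q b))"
    using a b by (auto intro: arr_hmeet arr_dom arr_cod)
  have "hom_le X Y (invo Q (hmeet Q Y X (invo Q a) (invo Q b))) (hmeet Q X Y a b)"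
    using invo_hmeet_le[OF arr_invo[OF a] arr_invo[OF b]] a b by (simp add: invo_invo)
  then show "hom_le Y X (hmeet Q Y X (invo Q a) (invo Q b)) (invo Q (hmeet Q X Y a b))"
    using invo_le_iff[OF m' m] by simp
qed

end

lemma symmetrisation_simps [simp]:
  "cob (symmetrisation Q A) = cob A"
  "cty (symmetrisation Q A) = cty A"
  "chom (symmetrisation Q A) y x = hmeet Q (cty A x) (cty A y) (chom A y x) (invo Q (chom A x y))"
  by (simp_all add: symmetrisation_def)

locale involutive_enriched_category =
  involutive_small_quantaloid Q + enriched_category Q A for Q A
begin

lemma arr_invo_chom: "x \<in> cob A \<Longrightarrow> y \<in> cob A \<Longrightarrow> arr (cty A x) (cty A y) (invo Q (chom A x y))"
  by (intro arr_invo arr_chom)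

lemma symmetrisation_le_chom:
  "x \<in> cob A \<Longrightarrow> y \<in> cob A \<Longrightarrow>
    hom_le (cty A x) (cty A y) (chom (symmetrisation Q A) y x) (chom A y x)"
  by (simp add: hmeet_le_left arr_chom)

lemma symmetrisation_le_invo_chom:
  "x \<in> cob A \<Longrightarrow> y \<in> cob A \<Longrightarrow>
    hom_le (cty A x) (cty A y) (chom (symmetrisation Q A) y x) (invo Q (chom A x y))"
  by (simp add: hmeet_le_right arr_invo_chom)

lemma qcategory_symmetrisation: "qcategory Q (symmetrisation Q A)"
  unfolding qcategory_def symmetrisation_simps(1,2)
proof (intro conjI ballI)
  let ?S = "chom (symmetrisation Q A)"
  fix x y z assume x: "x \<in> cob A" and y: "y \<in> cob A" and z: "z \<in> cob A"
  show "cty A x \<in> Obj Q" using x by (rule cty_Obj)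
  show "?S y x \<in> Hom Q (cty A x) (cty A y)"
    using arr_hmeet[OF cty_Obj[OF x] cty_Obj[OF y]] by (simp add: arr_def)
  have "hom_le (cty A x) (cty A z) (cmp Q (?S z y) (?S y x)) (cmp Q (chom A z y) (chom A y x))"
    by (rule cmp_mono[OF symmetrisation_le_chom[OF x y] symmetrisation_le_chom[OF y z]])
  also have "hom_le (cty A x) (cty A z) \<dots> (chom A z x)"
    using x y z by (rule chom_cmp_le)
  finally have S_le: "hom_le (cty A x) (cty A z) (cmp Q (?S z y) (?S y x)) (chom A z x)" .
  have "hom_le (cty A x) (cty A z) (cmp Q (?S z y) (?S y x))
      (cmp Q (invo Q (chom A y z)) (invo Q (chom A x y)))"
    by (rule cmp_mono[OF symmetrisation_le_invo_chom[OF x y] symmetrisation_le_invo_chom[OF y z]])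
  also have "\<dots> = invo Q (cmp Q (chom A x y) (chom A y z))"
    using invo_cmp[OF arr_chom[OF z y] arr_chom[OF y x]] by simp
  also have "hom_le (cty A x) (cty A z) \<dots> (invo Q (chom A x z))"
    using z y x by (intro invo_mono chom_cmp_le)
  finally have S_le_invo: "hom_le (cty A x) (cty A z) (cmp Q (?S z y) (?S y x)) (invo Q (chom A x z))" .
  show "leq Q (cmp Q (?S z y) (?S y x)) (?S z x)"
    using le_hmeet[OF S_le S_le_invo] by (simp add: hom_le_def)
  have "hom_le (cty A x) (cty A x) (idm Q (cty A x)) (invo Q (chom A x x))"
    using invo_mono[OF idm_le_chom[OF x]] invo_idm[OF cty_Obj[OF x]] by simp
  then show "leq Q (idm Q (cty A x)) (?S x x)"
    using le_hmeet[OF idm_le_chom[OF x]] by (simp add: hom_le_def)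
qed

lemma symmetric_symmetrisation: "symmetric Q (symmetrisation Q A)"
  unfolding symmetric_def symmetrisation_simps
proof (intro ballI)
  fix x y assume x: "x \<in> cob A" and y: "y \<in> cob A"
  show "hmeet Q (cty A y) (cty A x) (chom A x y) (invo Q (chom A y x)) =
      invo Q (hmeet Q (cty A x) (cty A y) (chom A y x) (invo Q (chom A x y)))"
    using invo_hmeet[OF arr_chom[OF x y] arr_invo_chom[OF x y]] invo_invo[OF arr_chom[OF y x]]
    by (simp add: hmeet_commute)
qed

end

locale cauchy_bilateral_quantaloid =
  fixes Q :: "('o, 'm) qtld"
  assumes cauchy_bilateral: "cauchy_bilateral Q"

sublocale cauchy_bilateral_quantaloid \<subseteq> involutive_small_quantaloid
  using cauchy_bilateral by unfold_locales (simp add: cauchy_bilateral_def)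

lemmas (in cauchy_bilateral_quantaloid) cauchy_bilateral_family =
  cauchy_bilateral[unfolded cauchy_bilateral_def, THEN conjunct2, rule_format]

locale bilateral_adjunction =
  cauchy_bilateral_quantaloid Q + presheaf_adjunction Q A X \<phi> \<psi> for Q A X \<phi> \<psi>
begin

definition adjoint_meet where
  "adjoint_meet y = hmeet Q (cty A y) X (\<psi> y) (invo Q (\<phi> y))"

definition presheaf_meet where
  "presheaf_meet y = hmeet Q X (cty A y) (invo Q (\<psi> y)) (\<phi> y)"

lemma arr_adjoint_meet: "y \<in> cob A \<Longrightarrow> arr (cty A y) X (adjoint_meet y)"
  unfolding adjoint_meet_def using Obj_X by (intro arr_hmeet cty_Obj)

lemma arr_presheaf_meet: "y \<in> cob A \<Longrightarrow> arr X (cty A y) (presheaf_meet y)"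
  unfolding presheaf_meet_def using Obj_X by (intro arr_hmeet cty_Obj)

lemma adjoint_meet_le: "y \<in> cob A \<Longrightarrow> hom_le (cty A y) X (adjoint_meet y) (\<psi> y)"
  unfolding adjoint_meet_def by (intro hmeet_le_left arr_adjoint)

lemma adjoint_meet_le_invo: "y \<in> cob A \<Longrightarrow> hom_le (cty A y) X (adjoint_meet y) (invo Q (\<phi> y))"
  unfolding adjoint_meet_def by (intro hmeet_le_right arr_invo arr_presheaf)

lemma presheaf_meet_le: "y \<in> cob A \<Longrightarrow> hom_le X (cty A y) (presheaf_meet y) (\<phi> y)"
  unfolding presheaf_meet_def by (intro hmeet_le_right arr_presheaf)

lemma presheaf_meet_le_invo: "y \<in> cob A \<Longrightarrow> hom_le X (cty A y) (presheaf_meet y) (invo Q (\<psi> y))"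
  unfolding presheaf_meet_def by (intro hmeet_le_left arr_invo arr_adjoint)

lemma meet_unit:
  "hom_le X X (idm Q X) (hsup Q X X ((\<lambda>y. cmp Q (adjoint_meet y) (presheaf_meet y)) ` cob A))"
proof -
  define T where "T = (\<lambda>y. (cty A y, \<phi> y, \<psi> y)) ` cob A"
  have T: "T \<subseteq> {(Y, f, g). Y \<in> Obj Q \<and> f \<in> Hom Q X Y \<and> g \<in> Hom Q Y X}"
    unfolding T_def using arr_presheaf arr_adjoint cty_Obj by (auto simp: arr_def)
  have family: "\<forall>(Yj, fj, gj)\<in>T. \<forall>(Yk, fk, gk)\<in>T.
      leq Q (cmp Q fk (cmp Q gj fj)) fk \<and> leq Q (cmp Q gj (cmp Q fj gk)) gk"
    unfolding T_def using presheaf_cmp_unit_le adjoint_cmp_unit_le by (auto simp: hom_le_def)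
  have unit: "{cmp Q g f | Y f g. (Y, f, g) \<in> T} = (\<lambda>y. cmp Q (\<psi> y) (\<phi> y)) ` cob A"
    unfolding T_def by blast
  have meets: "{cmp Q (hmeet Q Y X g (invo Q f)) (hmeet Q X Y (invo Q g) f) | Y f g. (Y, f, g) \<in> T}
      = (\<lambda>y. cmp Q (adjoint_meet y) (presheaf_meet y)) ` cob A"
    unfolding T_def adjoint_meet_def presheaf_meet_def by blast
  have "leq Q (idm Q X) (hsup Q X X ((\<lambda>y. cmp Q (adjoint_meet y) (presheaf_meet y)) ` cob A))"
    unfolding meets[symmetric]
    by (rule cauchy_bilateral_family[OF Obj_X T])
      (use family adjunction_unit in \<open>auto simp: unit hom_le_def\<close>)
  then show ?thesis
    using Obj_X arr_idm
    by (auto simp: hom_le_def intro!: arr_hsup arr_cmp[OF arr_presheaf_meet arr_adjoint_meet])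
qed

end

locale symmetric_adjunction = bilateral_adjunction +
  assumes symmetric: "symmetric Q A"
begin

lemma chom_sym: "x \<in> cob A \<Longrightarrow> y \<in> cob A \<Longrightarrow> chom A x y = invo Q (chom A y x)"
  using symmetric unfolding symmetric_def by blast

lemma adjoint_le_invo_presheaf:
  assumes x: "x \<in> cob A"
  shows "hom_le (cty A x) X (\<psi> x) (invo Q (\<phi> x))"
proof -
  have "\<psi> x = cmp Q (idm Q X) (\<psi> x)"
    using cmp_idm_left[OF arr_adjoint[OF x]] by simp
  also have "hom_le (cty A x) X \<dots>
      (cmp Q (hsup Q X X ((\<lambda>y. cmp Q (adjoint_meet y) (presheaf_meet y)) ` cob A)) (\<psi> x))"
    by (rule cmp_mono_left[OF meet_unit arr_adjoint[OF x]])
  also have "hom_le (cty A x) X \<dots> (invo Q (\<phi> x))"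
  proof (rule hsup_cmp_le[OF arr_adjoint[OF x] arr_invo[OF arr_presheaf[OF x]]])
    fix y assume y: "y \<in> cob A"
    have "cmp Q (cmp Q (adjoint_meet y) (presheaf_meet y)) (\<psi> x) =
        cmp Q (adjoint_meet y) (cmp Q (presheaf_meet y) (\<psi> x))"
      by (rule cmp_assoc[OF arr_adjoint[OF x] arr_presheaf_meet[OF y] arr_adjoint_meet[OF y], symmetric])
    also have "hom_le (cty A x) X \<dots> (cmp Q (invo Q (\<phi> y)) (cmp Q (\<phi> y) (\<psi> x)))"
      by (rule cmp_mono[OF cmp_mono_left[OF presheaf_meet_le[OF y] arr_adjoint[OF x]]
            adjoint_meet_le_invo[OF y]])
    also have "hom_le (cty A x) X \<dots> (cmp Q (invo Q (\<phi> y)) (chom A y x))"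
      by (rule cmp_mono_right[OF adjunction_counit[OF y x] arr_invo[OF arr_presheaf[OF y]]])
    also have "\<dots> = invo Q (cmp Q (chom A x y) (\<phi> y))"
      using invo_cmp[OF arr_presheaf[OF y] arr_chom[OF y x]] chom_sym[OF y x] by simp
    also have "hom_le (cty A x) X \<dots> (invo Q (\<phi> x))"
      by (rule invo_mono[OF presheaf_le[OF y x]])
    finally show "hom_le (cty A x) X (cmp Q (cmp Q (adjoint_meet y) (presheaf_meet y)) (\<psi> x))
        (invo Q (\<phi> x))" .
  qed (rule arr_cmp[OF arr_presheaf_meet arr_adjoint_meet])
  finally show ?thesis .
qed

lemma presheaf_le_invo_adjoint:
  assumes x: "x \<in> cob A"
  shows "hom_le X (cty A x) (\<phi> x) (invo Q (\<psi> x))"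
proof -
  have "\<phi> x = cmp Q (\<phi> x) (idm Q X)"
    using cmp_idm_right[OF arr_presheaf[OF x]] by simp
  also have "hom_le X (cty A x) \<dots>
      (cmp Q (\<phi> x) (hsup Q X X ((\<lambda>y. cmp Q (adjoint_meet y) (presheaf_meet y)) ` cob A)))"
    by (rule cmp_mono_right[OF meet_unit arr_presheaf[OF x]])
  also have "hom_le X (cty A x) \<dots> (invo Q (\<psi> x))"
  proof (rule cmp_hsup_le[OF arr_presheaf[OF x] arr_invo[OF arr_adjoint[OF x]]])
    fix y assume y: "y \<in> cob A"
    have "cmp Q (\<phi> x) (cmp Q (adjoint_meet y) (presheaf_meet y)) =
        cmp Q (cmp Q (\<phi> x) (adjoint_meet y)) (presheaf_meet y)"
      by (rule cmp_assoc[OF arr_presheaf_meet[OF y] arr_adjoint_meet[OF y] arr_presheaf[OF x]])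
    also have "hom_le X (cty A x) \<dots> (cmp Q (cmp Q (\<phi> x) (\<psi> y)) (invo Q (\<psi> y)))"
      by (rule cmp_mono[OF presheaf_meet_le_invo[OF y]
            cmp_mono_right[OF adjoint_meet_le[OF y] arr_presheaf[OF x]]])
    also have "hom_le X (cty A x) \<dots> (cmp Q (chom A x y) (invo Q (\<psi> y)))"
      by (rule cmp_mono_left[OF adjunction_counit[OF x y] arr_invo[OF arr_adjoint[OF y]]])
    also have "\<dots> = invo Q (cmp Q (\<psi> y) (chom A y x))"
      using invo_cmp[OF arr_chom[OF x y] arr_adjoint[OF y]] chom_sym[OF x y] by simp
    also have "hom_le X (cty A x) \<dots> (invo Q (\<psi> x))"
      by (rule invo_mono[OF adjoint_le[OF y x]])
    finally show "hom_le X (cty A x) (cmp Q (\<phi> x) (cmp Q (adjoint_meet y) (presheaf_meet y)))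
        (invo Q (\<psi> x))" .
  qed (rule arr_cmp[OF arr_presheaf_meet arr_adjoint_meet])
  finally show ?thesis .
qed

lemma adjoint_eq_invo_presheaf:
  assumes x: "x \<in> cob A"
  shows "\<psi> x = invo Q (\<phi> x)"
proof (rule hom_le_antisym)
  show "hom_le (cty A x) X (\<psi> x) (invo Q (\<phi> x))"
    using x by (rule adjoint_le_invo_presheaf)
  show "hom_le (cty A x) X (invo Q (\<phi> x)) (\<psi> x)"
    using presheaf_le_invo_adjoint[OF x] invo_le_iff[OF arr_presheaf[OF x] arr_adjoint[OF x]] by simp
qed

end

context cauchy_bilateral_quantaloid
begin

lemma symmetric_adjunctionI:
  assumes "qcategory Q A" "symmetric Q A" "X \<in> Obj Q" "presheaf Q A X \<phi>" "right_adjoint Q A X \<phi> \<psi>"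
  shows "symmetric_adjunction Q A X \<phi> \<psi>"
  using assms cauchy_bilateral quantaloid by unfold_locales

lemma chom_cauchy_completion:
  assumes A: "qcategory Q A" "symmetric Q A"
    and Y\<psi>: "(Y, \<psi>) \<in> cob (cauchy_completion Q A)"
  shows "chom (cauchy_completion Q A) (Y, \<psi>) (X, \<phi>) =
    hsup Q X Y ((\<lambda>y. cmp Q (invo Q (\<psi> y)) (\<phi> y)) ` cob A)"
proof -
  have Y: "Y \<in> Obj Q" and \<psi>: "left_adjoint_presheaf Q A Y \<psi>"
    using Y\<psi> by (simp_all add: cauchy_completion_def)
  have any_adjoint: "hsup Q X Y ((\<lambda>y. cmp Q (\<psi>' y) (\<phi> y)) ` cob A) =
      hsup Q X Y ((\<lambda>y. cmp Q (invo Q (\<psi> y)) (\<phi> y)) ` cob A)"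
    if "right_adjoint Q A Y \<psi> \<psi>'" for \<psi>'
  proof -
    interpret symmetric_adjunction Q A Y \<psi> \<psi>'
      using A Y \<psi> that by (intro symmetric_adjunctionI) (simp_all add: left_adjoint_presheaf_def)
    show ?thesis
      using adjoint_eq_invo_presheaf by simp
  qed
  obtain \<psi>' where "right_adjoint Q A Y \<psi> \<psi>'"
    using \<psi> by (auto simp: left_adjoint_presheaf_def)
  then show ?thesis
    unfolding cauchy_completion_def using any_adjoint by (auto intro!: the_equality)
qed

lemma symmetric_cauchy_completion:
  assumes A: "qcategory Q A" "symmetric Q A"
  shows "symmetric Q (cauchy_completion Q A)"
  unfolding symmetric_def
proof (intro ballI)
  fix x y assume x: "x \<in> cob (cauchy_completion Q A)" and y: "y \<in> cob (cauchy_completion Q A)"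
  obtain X \<phi> Y \<psi> where xy: "x = (X, \<phi>)" "y = (Y, \<psi>)" by fastforce
  interpret enriched_category Q A using A(1) by unfold_locales
  have X: "X \<in> Obj Q" and Y: "Y \<in> Obj Q"
    and \<phi>: "\<And>z. z \<in> cob A \<Longrightarrow> arr X (cty A z) (\<phi> z)"
    and \<psi>: "\<And>z. z \<in> cob A \<Longrightarrow> arr Y (cty A z) (\<psi> z)"
    using x y cty_Obj unfolding xy
    by (auto simp: cauchy_completion_def left_adjoint_presheaf_def presheaf_def arr_def)
  have invo_term: "invo Q (cmp Q (invo Q (\<psi> z)) (\<phi> z)) = cmp Q (invo Q (\<phi> z)) (\<psi> z)"
    if "z \<in> cob A" for z
    using invo_cmp[OF \<phi>[OF that] arr_invo[OF \<psi>[OF that]]] invo_invo[OF \<psi>[OF that]] by simp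
  have "invo Q (hsup Q X Y ((\<lambda>z. cmp Q (invo Q (\<psi> z)) (\<phi> z)) ` cob A)) =
      hsup Q Y X ((\<lambda>z. cmp Q (invo Q (\<phi> z)) (\<psi> z)) ` cob A)"
    using X Y \<phi> \<psi> invo_term
    by (subst invo_hsup) (auto simp: image_image intro!: arr_cmp arr_invo cong: image_cong)
  then show "chom (cauchy_completion Q A) x y = invo Q (chom (cauchy_completion Q A) y x)"
    using x y unfolding xy by (simp add: chom_cauchy_completion[OF A])
qed

lemma presheaf_eq_chom_symmetrisation:
  assumes C: "qcategory Q C"
    and "symmetric_adjunction Q (symmetrisation Q C) X \<phi> \<psi>"
    and "presheaf_adjunction Q C X (hom_tensor C X \<phi>) (tensor_hom C X \<psi>)"
    and a: "a \<in> cob C" "cty C a = X"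
    and rep: "\<And>y. y \<in> cob C \<Longrightarrow> hom_tensor C X \<phi> y = chom C y a"
    and y: "y \<in> cob C"
  shows "\<phi> y = chom (symmetrisation Q C) y a"
proof -
  let ?Cs = "symmetrisation Q C"
  interpret C: involutive_enriched_category Q C using C by unfold_locales
  interpret Cs: symmetric_adjunction Q ?Cs X \<phi> \<psi> by fact
  interpret Ext: presheaf_adjunction Q C X "hom_tensor C X \<phi>" "tensor_hom C X \<psi>" by fact
  have arr_\<phi>: "\<And>y. y \<in> cob C \<Longrightarrow> arr X (cty C y) (\<phi> y)"
    and arr_\<psi>: "\<And>y. y \<in> cob C \<Longrightarrow> arr (cty C y) X (\<psi> y)"
    using Cs.arr_presheaf Cs.arr_adjoint by simp_all
  have \<phi>_le: "hom_le X (cty C z) (\<phi> z) (chom ?Cs z a)" if z: "z \<in> cob C" for z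
  proof -
    have "hom_le X (cty C z) (\<phi> z) (chom C z a)"
      using C.le_hom_tensor[OF Ext.Obj_X arr_\<phi> z] rep[OF z] by simp
    moreover have "hom_le (cty C z) X (invo Q (\<phi> z)) (chom C a z)"
    proof -
      have "hom_le (cty C z) X (\<psi> z) (tensor_hom C X \<psi> z)"
        using C.le_tensor_hom[OF Ext.Obj_X arr_\<psi> z] .
      also have "hom_le (cty C z) X \<dots> (chom C a z)"
        using Ext.adjoint_le_chom[OF a _ z] C.idm_le_chom[OF a(1)] rep[OF a(1)] a(2) by simp
      finally show ?thesis
        using Cs.adjoint_eq_invo_presheaf[of z] z by simp
    qed
    then have "hom_le X (cty C z) (\<phi> z) (invo Q (chom C a z))"
      using invo_le_iff[of X "cty C z" "\<phi> z" "chom C a z"] arr_\<phi>[OF z] C.arr_chom[OF z a(1)] a(2)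
      by simp
    ultimately show ?thesis
      using le_hmeet a(2) by simp
  qed
  have \<psi>_le: "hom_le (cty C z) X (\<psi> z) (chom ?Cs a z)" if z: "z \<in> cob C" for z
    using invo_mono[OF \<phi>_le[OF z]] Cs.adjoint_eq_invo_presheaf[of z] Cs.chom_sym[of a z] z a by simp
  have "hom_le X (cty ?Cs y) (chom ?Cs y a) (\<phi> y)"
    by (rule Cs.chom_le_presheaf) (use a \<psi>_le y in simp_all)
  then show ?thesis
    using \<phi>_le y by (auto intro: hom_le_antisym)
qed

lemma cauchy_complete_symmetrisation:
  assumes C: "qcategory Q C" and complete: "cauchy_complete Q C"
  shows "cauchy_complete Q (symmetrisation Q C)"
  unfolding cauchy_complete_def
proof (intro ballI allI impI)
  let ?Cs = "symmetrisation Q C"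
  fix X \<phi> assume X: "X \<in> Obj Q" and \<phi>: "left_adjoint_presheaf Q ?Cs X \<phi>"
  interpret C: involutive_enriched_category Q C using C by unfold_locales
  obtain \<psi> where \<psi>: "right_adjoint Q ?Cs X \<phi> \<psi>"
    using \<phi> by (auto simp: left_adjoint_presheaf_def)
  interpret Cs: symmetric_adjunction Q ?Cs X \<phi> \<psi>
    using C.qcategory_symmetrisation C.symmetric_symmetrisation X \<phi> \<psi>
    by (intro symmetric_adjunctionI) (simp_all add: left_adjoint_presheaf_def)
  interpret Ext: presheaf_adjunction Q C X "hom_tensor C X \<phi>" "tensor_hom C X \<psi>"
    by (rule C.presheaf_adjunction_tensor[OF Cs.presheaf_adjunction_axioms])
      (simp_all add: C.symmetrisation_le_chom[simplified])
  obtain a where a: "a \<in> cob C" "cty C a = X"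
    and rep: "\<And>y. y \<in> cob C \<Longrightarrow> hom_tensor C X \<phi> y = chom C y a"
    using complete X Ext.presheaf Ext.right_adjoint
    unfolding cauchy_complete_def left_adjoint_presheaf_def by blast
  show "\<exists>a\<in>cob ?Cs. cty ?Cs a = X \<and> (\<forall>y\<in>cob ?Cs. \<phi> y = chom ?Cs y a)"
    using presheaf_eq_chom_symmetrisation[OF C Cs.symmetric_adjunction_axioms
        Ext.presheaf_adjunction_axioms a rep] a
    by auto
qed

end

theorem corollary3p9:
  fixes Q :: "('o, 'm) qtld" and A :: "('a, 'o, 'm) qcat" and C :: "('c, 'o, 'm) qcat"
  assumes "cauchy_bilateral Q"
  shows "(qcategory Q A \<and> symmetric Q A \<longrightarrow> symmetric Q (cauchy_completion Q A)) \<and>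
         (qcategory Q C \<and> cauchy_complete Q C \<longrightarrow> cauchy_complete Q (symmetrisation Q C))"
proof -
  interpret cauchy_bilateral_quantaloid Q by unfold_locales (rule assms)
  show ?thesis
    using symmetric_cauchy_completion cauchy_complete_symmetrisation by blast
qed

end
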